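(* Let $X$ be a Polish space and $\mathcal{B}$ a countable base of its topology which is closed under finite intersections and contains $X$. The following are equivalent: (i) there is a monotone Borel hull operation on $\mathcal{M}$ with respect to $\mathcal{M}$; (ii) there is a $\mathcal{B}$-regular monotone Borel hull operation on $\mathcal{M}$ with respect to $\mathcal{M}$; (iii) there is a monotone Borel hull operation on $\mathtt{Baire}$ with respect to $\mathcal{M}$.
   Context: $\mathcal{M}$ is the $\sigma$-ideal of meager subsets of $X$, and $\mathtt{Baire}$ is the $\sigma$-algebra of subsets of $X$ with the Baire property. For a family $\mathcal{F}$ of subsets of $X$, a Borel hull operation on $\mathcal{F}$ with respect to $\mathcal{M}$ is a map $\psi$ from $\mathcal{F}$ to the Borel subsets of $X$ such that $A\subseteq\psi(A)$ and $\psi(A)\setminus A\in\mathcal{M}$ for every $A\in\mathcal{F}$. It is monotone if $\psi(A_1)\subseteq\psi(A_2)$ whenever $A_1\subseteq A_2$ are in $\mathcal{F}$. A monotone Borel hull operation $\varphi$ on $\mathcal{M}$ (so $\varphi(A)$ is a Borel meager set for each $A\in\mathcal{M}$) is $\mathcal{B}$-regular if $\varphi(A)\cap U\subseteq\varphi(A\cap U)$ for all $A\in\mathcal{M}$ and $U\in\mathcal{B}$. *)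

theory Defs
  imports "HOL-Analysis.Analysis"
begin

definition nowhere_dense :: "'a::topological_space set \<Rightarrow> bool" where
  "nowhere_dense A \<longleftrightarrow> interior (closure A) = {}"

definition meager_sets :: "'a::topological_space set set" where
  "meager_sets = {A. \<exists>F. countable F \<and> (\<forall>N\<in>F. nowhere_dense N) \<and> A \<subseteq> \<Union>F}"

definition baire_sets :: "'a::topological_space set set" where
  "baire_sets = {A. \<exists>U. open U \<and> (A - U) \<union> (U - A) \<in> meager_sets}"

definition borel_hull_op :: "'a::topological_space set set \<Rightarrow> 'a set set \<Rightarrow> ('a set \<Rightarrow> 'a set) \<Rightarrow> bool" where
  "borel_hull_op F I \<psi> \<longleftrightarrow>
     (\<forall>A\<in>F. \<psi> A \<in> sets borel \<and> A \<subseteq> \<psi> A \<and> \<psi> A - A \<in> I)"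

definition monotone_hull :: "'a set set \<Rightarrow> ('a set \<Rightarrow> 'a set) \<Rightarrow> bool" where
  "monotone_hull F \<psi> \<longleftrightarrow> (\<forall>A1\<in>F. \<forall>A2\<in>F. A1 \<subseteq> A2 \<longrightarrow> \<psi> A1 \<subseteq> \<psi> A2)"

definition regular_hull :: "'a::topological_space set set \<Rightarrow> ('a set \<Rightarrow> 'a set) \<Rightarrow> bool" where
  "regular_hull \<B> \<phi> \<longleftrightarrow> (\<forall>A\<in>meager_sets. \<forall>U\<in>\<B>. \<phi> A \<inter> U \<subseteq> \<phi> (A \<inter> U))"

end

theory Submission
  imports Defs
begin

text \<open>A monotone hull \<open>\<phi>\<close> on the meager sets is made \<open>\<B>\<close>-regular by intersecting \<open>\<phi> A\<close> with
  the countably many Borel sets \<open>-U \<union> \<phi> (A \<inter> U)\<close>, \<open>U \<in> \<B>\<close>. A set \<open>A\<close> with the Baire property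
  is covered, up to a meager set, by its open core \<open>W A\<close>, the union of the basic sets \<open>V\<close> with
  \<open>V - A\<close> meager; so \<open>closure (W A) \<union> \<phi> (A - W A)\<close> is a Borel hull of \<open>A\<close>. It is monotone
  because regularity lets one localize \<open>\<phi> (A\<^sub>1 - W A\<^sub>1)\<close> to basic sets disjoint from
  \<open>closure (W A\<^sub>2)\<close>, where \<open>A\<^sub>1 - W A\<^sub>1\<close> lies inside \<open>A\<^sub>2 - W A\<^sub>2\<close>. Conversely a hull on the
  Baire sets restricts to one on the meager sets.\<close>

lemma meager_setsI:
  "countable F \<Longrightarrow> (\<And>N. N \<in> F \<Longrightarrow> nowhere_dense N) \<Longrightarrow> A \<subseteq> \<Union>F \<Longrightarrow> A \<in> meager_sets"
  unfolding meager_sets_def by (intro CollectI exI[of _ F]) simp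

lemma meager_sets_subset:
  assumes "A \<in> meager_sets" and "B \<subseteq> A"
  shows "B \<in> meager_sets"
proof -
  obtain F where "countable F" "\<And>N. N \<in> F \<Longrightarrow> nowhere_dense N" "A \<subseteq> \<Union>F"
    using assms(1) unfolding meager_sets_def by blast
  then show ?thesis
    using assms(2) by (intro meager_setsI[of F]) auto
qed

lemma meager_sets_Union:
  assumes "countable \<A>" and "\<And>A. A \<in> \<A> \<Longrightarrow> A \<in> meager_sets"
  shows "\<Union>\<A> \<in> meager_sets"
proof -
  have "\<forall>A\<in>\<A>. \<exists>F. countable F \<and> (\<forall>N\<in>F. nowhere_dense N) \<and> A \<subseteq> \<Union>F"
    using assms(2) unfolding meager_sets_def mem_Collect_eq by blast
  then obtain G where "\<forall>A\<in>\<A>. countable (G A) \<and> (\<forall>N\<in>G A. nowhere_dense N) \<and> A \<subseteq> \<Union>(G A)"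
    by (rule bchoice[THEN exE])
  then have G: "\<And>A. A \<in> \<A> \<Longrightarrow> countable (G A) \<and> (\<forall>N\<in>G A. nowhere_dense N) \<and> A \<subseteq> \<Union>(G A)"
    by blast
  show ?thesis
  proof (rule meager_setsI[of "\<Union>A\<in>\<A>. G A"])
    show "countable (\<Union>A\<in>\<A>. G A)"
      by (rule countable_UN[OF assms(1)]) (use G in blast)
    show "nowhere_dense N" if "N \<in> (\<Union>A\<in>\<A>. G A)" for N
      using that G by blast
    show "\<Union>\<A> \<subseteq> \<Union>(\<Union>A\<in>\<A>. G A)"
    proof
      fix x assume "x \<in> \<Union>\<A>"
      then obtain A where "A \<in> \<A>" "x \<in> A" by blast
      then have "x \<in> \<Union>(G A)" using G by blast
      with \<open>A \<in> \<A>\<close> show "x \<in> \<Union>(\<Union>A\<in>\<A>. G A)" by blast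
    qed
  qed
qed

lemma meager_sets_Un: "A \<in> meager_sets \<Longrightarrow> B \<in> meager_sets \<Longrightarrow> A \<union> B \<in> meager_sets"
  using meager_sets_Union[of "{A, B}"] by auto

lemma closure_Diff_open_meager:
  assumes "open U"
  shows "closure U - U \<in> meager_sets"
proof -
  have "interior (closure U - U) \<inter> U = {}"
    using interior_subset by blast
  then have "interior (closure U - U) \<inter> closure U = {}"
    by (simp add: open_Int_closure_eq_empty)
  then have "interior (closure U - U) = {}"
    using interior_subset by blast
  then have "nowhere_dense (closure U - U)"
    using assms unfolding nowhere_dense_def by (simp add: closed_Diff closure_closed)
  then show ?thesis
    by (intro meager_setsI[of "{closure U - U}"]) auto
qed

lemma meager_sets_subset_baire_sets: "meager_sets \<subseteq> baire_sets"
  unfolding baire_sets_def by (auto intro: exI[of _ "{}"])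

lemma borel_hull_opD:
  assumes "borel_hull_op F I \<psi>" and "A \<in> F"
  shows "\<psi> A \<in> sets borel" and "A \<subseteq> \<psi> A" and "\<psi> A - A \<in> I"
  using assms unfolding borel_hull_op_def by auto

lemma borel_hull_op_subfamily: "borel_hull_op F I \<psi> \<Longrightarrow> F' \<subseteq> F \<Longrightarrow> borel_hull_op F' I \<psi>"
  unfolding borel_hull_op_def by blast

lemma monotone_hull_subfamily: "monotone_hull F \<psi> \<Longrightarrow> F' \<subseteq> F \<Longrightarrow> monotone_hull F' \<psi>"
  unfolding monotone_hull_def by blast

lemma monotone_hullD: "monotone_hull F \<psi> \<Longrightarrow> A\<^sub>1 \<in> F \<Longrightarrow> A\<^sub>2 \<in> F \<Longrightarrow> A\<^sub>1 \<subseteq> A\<^sub>2 \<Longrightarrow> \<psi> A\<^sub>1 \<subseteq> \<psi> A\<^sub>2"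
  unfolding monotone_hull_def by blast

definition regularize :: "'a set set \<Rightarrow> ('a set \<Rightarrow> 'a set) \<Rightarrow> 'a set \<Rightarrow> 'a set" where
  "regularize \<B> \<phi> A = \<phi> A \<inter> (\<Inter>U\<in>\<B>. - U \<union> \<phi> (A \<inter> U))"

lemma borel_hull_op_regularize:
  assumes "countable \<B>" and "topological_basis \<B>"
    and \<phi>: "borel_hull_op meager_sets meager_sets \<phi>"
  shows "borel_hull_op meager_sets meager_sets (regularize \<B> \<phi>)"
  unfolding borel_hull_op_def
proof (intro ballI conjI)
  fix A :: "'a set" assume A: "A \<in> meager_sets"
  have AU: "A \<inter> U \<in> meager_sets" for U
    using A meager_sets_subset by blast
  have "- U \<union> \<phi> (A \<inter> U) \<in> sets borel" if "U \<in> \<B>" for U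
  proof -
    have "closed (- U)"
      using that assms(2) topological_basis_open by blast
    then show ?thesis
      using borel_closed borel_hull_opD(1)[OF \<phi> AU] by blast
  qed
  then have "(\<Inter>U\<in>\<B>. - U \<union> \<phi> (A \<inter> U)) \<in> sets borel"
    using assms(1) by (intro sets.countable_INT'') auto
  then show "regularize \<B> \<phi> A \<in> sets borel"
    unfolding regularize_def using borel_hull_opD(1)[OF \<phi> A] by auto
  show "A \<subseteq> regularize \<B> \<phi> A"
    unfolding regularize_def using borel_hull_opD(2)[OF \<phi>] A AU by blast
  show "regularize \<B> \<phi> A - A \<in> meager_sets"
    using borel_hull_opD(3)[OF \<phi> A] by (rule meager_sets_subset) (auto simp: regularize_def)
qed

lemma monotone_hull_regularize:
  assumes "monotone_hull meager_sets \<phi>"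
  shows "monotone_hull meager_sets (regularize \<B> \<phi>)"
  unfolding monotone_hull_def
proof (intro ballI impI)
  fix A\<^sub>1 A\<^sub>2 :: "'a set"
  assume A: "A\<^sub>1 \<in> meager_sets" "A\<^sub>2 \<in> meager_sets" "A\<^sub>1 \<subseteq> A\<^sub>2"
  have "\<phi> (A\<^sub>1 \<inter> U) \<subseteq> \<phi> (A\<^sub>2 \<inter> U)" for U
    using A by (intro monotone_hullD[OF assms]) (auto elim: meager_sets_subset)
  then show "regularize \<B> \<phi> A\<^sub>1 \<subseteq> regularize \<B> \<phi> A\<^sub>2"
    using monotone_hullD[OF assms A] unfolding regularize_def by blast
qed

lemma regular_hull_regularize:
  assumes "\<And>U V. U \<in> \<B> \<Longrightarrow> V \<in> \<B> \<Longrightarrow> U \<inter> V \<in> \<B>"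
  shows "regular_hull \<B> (regularize \<B> \<phi>)"
  unfolding regular_hull_def
proof (intro ballI subsetI)
  fix A V x assume V: "V \<in> \<B>" and x: "x \<in> regularize \<B> \<phi> A \<inter> V"
  have "x \<in> - U \<union> \<phi> (A \<inter> V \<inter> U)" if "U \<in> \<B>" for U
    using x assms[OF V that] by (auto simp: regularize_def Int_assoc)
  then show "x \<in> regularize \<B> \<phi> (A \<inter> V)"
    using x V unfolding regularize_def by blast
qed

definition open_core :: "'a set set \<Rightarrow> 'a::topological_space set \<Rightarrow> 'a set" where
  "open_core \<B> A = \<Union>{V\<in>\<B>. V - A \<in> meager_sets}"

lemma open_open_core: "topological_basis \<B> \<Longrightarrow> open (open_core \<B> A)"
  unfolding open_core_def using topological_basis_open by blast

lemma open_core_mono: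
  assumes "A\<^sub>1 \<subseteq> A\<^sub>2"
  shows "open_core \<B> A\<^sub>1 \<subseteq> open_core \<B> A\<^sub>2"
proof -
  have "V - A\<^sub>2 \<in> meager_sets" if "V - A\<^sub>1 \<in> meager_sets" for V
    using that by (rule meager_sets_subset) (use assms in blast)
  then show ?thesis
    unfolding open_core_def by blast
qed

lemma open_core_Diff_meager:
  assumes "countable \<B>"
  shows "open_core \<B> A - A \<in> meager_sets"
proof -
  have "open_core \<B> A - A = \<Union>((\<lambda>V. V - A) ` {V\<in>\<B>. V - A \<in> meager_sets})"
    unfolding open_core_def by blast
  also have "\<dots> \<in> meager_sets"
    using assms by (intro meager_sets_Union) auto
  finally show ?thesis .
qed

lemma Diff_open_core_meager:
  assumes "topological_basis \<B>" and "A \<in> baire_sets"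
  shows "A - open_core \<B> A \<in> meager_sets"
proof -
  obtain Q where Q: "open Q" "(A - Q) \<union> (Q - A) \<in> meager_sets"
    using assms(2) unfolding baire_sets_def by blast
  have "Q \<subseteq> open_core \<B> A"
  proof
    fix x assume "x \<in> Q"
    then obtain V where V: "V \<in> \<B>" "x \<in> V" "V \<subseteq> Q"
      using topological_basisE[OF assms(1) Q(1)] by blast
    have "V - A \<in> meager_sets"
      using Q(2) by (rule meager_sets_subset) (use V in blast)
    then show "x \<in> open_core \<B> A"
      using V unfolding open_core_def by blast
  qed
  then have "A - open_core \<B> A \<subseteq> (A - Q) \<union> (Q - A)"
    by blast
  then show ?thesis
    by (rule meager_sets_subset[OF Q(2)])
qed

definition baire_hull :: "'a set set \<Rightarrow> ('a set \<Rightarrow> 'a set) \<Rightarrow> 'a::topological_space set \<Rightarrow> 'a set" where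
  "baire_hull \<B> \<phi> A = closure (open_core \<B> A) \<union> \<phi> (A - open_core \<B> A)"

lemma borel_hull_op_baire_hull:
  assumes "countable \<B>" and "topological_basis \<B>"
    and \<phi>: "borel_hull_op meager_sets meager_sets \<phi>"
  shows "borel_hull_op baire_sets meager_sets (baire_hull \<B> \<phi>)"
  unfolding borel_hull_op_def
proof (intro ballI conjI)
  fix A :: "'a set" assume "A \<in> baire_sets"
  define W where "W = open_core \<B> A"
  have M: "A - W \<in> meager_sets"
    unfolding W_def using Diff_open_core_meager[OF assms(2)] \<open>A \<in> baire_sets\<close> .
  have hull: "baire_hull \<B> \<phi> A = closure W \<union> \<phi> (A - W)"
    by (simp add: baire_hull_def W_def)
  show "baire_hull \<B> \<phi> A \<in> sets borel"
    unfolding hull using borel_closed[OF closed_closure] borel_hull_opD(1)[OF \<phi> M] by blast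
  show "A \<subseteq> baire_hull \<B> \<phi> A"
    unfolding hull using borel_hull_opD(2)[OF \<phi> M] closure_subset[of W] by blast
  have "(closure W - W) \<union> (W - A) \<union> (\<phi> (A - W) - (A - W)) \<in> meager_sets"
    unfolding W_def using closure_Diff_open_meager[OF open_open_core[OF assms(2)]]
      open_core_Diff_meager[OF assms(1)] borel_hull_opD(3)[OF \<phi> M[unfolded W_def]]
    by (intro meager_sets_Un)
  moreover have "baire_hull \<B> \<phi> A - A \<subseteq> (closure W - W) \<union> (W - A) \<union> (\<phi> (A - W) - (A - W))"
    unfolding hull by blast
  ultimately show "baire_hull \<B> \<phi> A - A \<in> meager_sets"
    by (rule meager_sets_subset)
qed

lemma monotone_hull_baire_hull:
  assumes \<B>: "topological_basis \<B>"
    and mono: "monotone_hull meager_sets \<phi>" and reg: "regular_hull \<B> \<phi>"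
  shows "monotone_hull baire_sets (baire_hull \<B> \<phi>)"
  unfolding monotone_hull_def
proof (intro ballI impI subsetI)
  fix A\<^sub>1 A\<^sub>2 :: "'a set" and x
  assume A: "A\<^sub>1 \<in> baire_sets" "A\<^sub>2 \<in> baire_sets" "A\<^sub>1 \<subseteq> A\<^sub>2" and x: "x \<in> baire_hull \<B> \<phi> A\<^sub>1"
  define W\<^sub>1 W\<^sub>2 where "W\<^sub>1 = open_core \<B> A\<^sub>1" and "W\<^sub>2 = open_core \<B> A\<^sub>2"
  have M\<^sub>1: "A\<^sub>1 - W\<^sub>1 \<in> meager_sets" and M\<^sub>2: "A\<^sub>2 - W\<^sub>2 \<in> meager_sets"
    unfolding W\<^sub>1_def W\<^sub>2_def using Diff_open_core_meager[OF \<B>] A by auto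
  show "x \<in> baire_hull \<B> \<phi> A\<^sub>2"
  proof (cases "x \<in> closure W\<^sub>2")
    case True
    then show ?thesis unfolding baire_hull_def W\<^sub>2_def by blast
  next
    case False
    have "closure W\<^sub>1 \<subseteq> closure W\<^sub>2"
      unfolding W\<^sub>1_def W\<^sub>2_def by (intro closure_mono open_core_mono A(3))
    then have x\<^sub>1: "x \<in> \<phi> (A\<^sub>1 - W\<^sub>1)"
      using x False unfolding baire_hull_def W\<^sub>1_def by blast
    obtain V where V: "V \<in> \<B>" "x \<in> V" "V \<subseteq> - closure W\<^sub>2"
      using topological_basisE[OF \<B>, of "- closure W\<^sub>2" x] False by auto
    have "x \<in> \<phi> ((A\<^sub>1 - W\<^sub>1) \<inter> V)"
      using reg M\<^sub>1 V x\<^sub>1 unfolding regular_hull_def by blast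
    moreover have "(A\<^sub>1 - W\<^sub>1) \<inter> V \<subseteq> A\<^sub>2 - W\<^sub>2"
      using V(3) A(3) closure_subset[of W\<^sub>2] by blast
    moreover have "(A\<^sub>1 - W\<^sub>1) \<inter> V \<in> meager_sets"
      using M\<^sub>1 by (rule meager_sets_subset) blast
    ultimately have "x \<in> \<phi> (A\<^sub>2 - W\<^sub>2)"
      using monotone_hullD[OF mono _ M\<^sub>2] by blast
    then show ?thesis unfolding baire_hull_def W\<^sub>2_def by blast
  qed
qed

theorem theorem3p2:
  fixes \<B> :: "'a::polish_space set set"
  assumes "countable \<B>" and "topological_basis \<B>"
    and "\<And>U V. U \<in> \<B> \<Longrightarrow> V \<in> \<B> \<Longrightarrow> U \<inter> V \<in> \<B>"
    and "UNIV \<in> \<B>"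
  shows "((\<exists>\<phi>::'a set \<Rightarrow> 'a set. borel_hull_op meager_sets meager_sets \<phi> \<and> monotone_hull meager_sets \<phi>)
           \<longleftrightarrow> (\<exists>\<phi>::'a set \<Rightarrow> 'a set. borel_hull_op meager_sets meager_sets \<phi> \<and> monotone_hull meager_sets \<phi>
                     \<and> regular_hull \<B> \<phi>))
       \<and> ((\<exists>\<phi>::'a set \<Rightarrow> 'a set. borel_hull_op meager_sets meager_sets \<phi> \<and> monotone_hull meager_sets \<phi>)
           \<longleftrightarrow> (\<exists>\<psi>::'a set \<Rightarrow> 'a set. borel_hull_op baire_sets meager_sets \<psi> \<and> monotone_hull baire_sets \<psi>))"
proof -
  have to_regular: "\<exists>\<phi>'::'a set \<Rightarrow> 'a set. borel_hull_op meager_sets meager_sets \<phi>' \<and> monotone_hull meager_sets \<phi>'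
      \<and> regular_hull \<B> \<phi>'"
    if "borel_hull_op meager_sets meager_sets \<phi>" "monotone_hull meager_sets \<phi>" for \<phi> :: "'a set \<Rightarrow> 'a set"
    using that borel_hull_op_regularize[OF assms(1,2)] monotone_hull_regularize
      regular_hull_regularize[OF assms(3)] by blast
  have to_baire: "\<exists>\<psi>::'a set \<Rightarrow> 'a set. borel_hull_op baire_sets meager_sets \<psi> \<and> monotone_hull baire_sets \<psi>"
    if "borel_hull_op meager_sets meager_sets \<phi>" "monotone_hull meager_sets \<phi>" "regular_hull \<B> \<phi>"
    for \<phi> :: "'a set \<Rightarrow> 'a set"
    using borel_hull_op_baire_hull[OF assms(1,2) that(1)] monotone_hull_baire_hull[OF assms(2) that(2,3)]
    by blast
  have from_baire: "borel_hull_op meager_sets meager_sets \<psi> \<and> monotone_hull meager_sets \<psi>"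
    if "borel_hull_op baire_sets meager_sets \<psi>" "monotone_hull baire_sets \<psi>" for \<psi> :: "'a set \<Rightarrow> 'a set"
    using that borel_hull_op_subfamily monotone_hull_subfamily meager_sets_subset_baire_sets by blast
  show ?thesis
  proof (intro conjI iffI)
  qed (use to_regular to_baire from_baire in \<open>blast+\<close>)
qed

end
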